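(* Let $m>1$, $N\ge2$, $\chi>0$, and let $k\ge2$ be an integer with $\chi<C_k$. Let $T\in(0,\infty)$ and let $X\in C^0([0,T),\mathcal R^N)$ be a solution of the gradient flow system on $[0,T)$. Then any weak blow-up set of $X$ at time $T$ containing at least two indices contains at least $k+1$ indices.
   Context: $\mathcal R^N=\{X\in\mathbb R^N: X_1<\dots<X_N,\ \sum_iX_i=0\}$. For $p\ge2$, $C_p$ is defined by $\frac1{C_p}=\max_{X\in\mathcal R^p}\frac{\sum_{1\le i\ne j\le p}|X_j-X_i|^{1-m}}{\sum_{i=1}^{p-1}(X_{i+1}-X_i)^{1-m}}$. Gradient flow system: for $i=1,\dots,N$, $\dot X_i=-(X_{i+1}-X_i)^{-m}+(X_i-X_{i-1})^{-m}+2\chi\sum_{j\ne i}\mathrm{sign}(j-i)|X_j-X_i|^{-m}$, the first term absent for $i=N$ and the second for $i=1$. A set $\mathcal I=[l,r]$ of consecutive integers in $[1,N]$ weakly blows up at time $T$ if $\liminf_{t\to T^-}(X_{i+1}(t)-X_i(t))=0$ for every $i\in[l,r-1]$; a weak blow-up set is such a set that is maximal for inclusion. *)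

theory Defs
  imports "HOL-Analysis.Analysis"
begin

text \<open>Points of R^N are represented as functions nat => real, indices 1..N used.\<close>

definition region :: "nat \<Rightarrow> (nat \<Rightarrow> real) set" where
  "region N = {X. (\<forall>i\<in>{1..<N}. X i < X (i+1)) \<and> (\<Sum>i=1..N. X i) = 0}"

definition ratioC :: "real \<Rightarrow> nat \<Rightarrow> (nat \<Rightarrow> real) \<Rightarrow> real" where
  "ratioC m p X =
     (\<Sum>i\<in>{1..p}. \<Sum>j\<in>{1..p}-{i}. \<bar>X j - X i\<bar> powr (1 - m)) /
     (\<Sum>i=1..<p. (X (i+1) - X i) powr (1 - m))"

text \<open>1/C_p is the maximum of ratioC over region p (the paper asserts it is attained).\<close>
definition Cconst :: "real \<Rightarrow> nat \<Rightarrow> real" where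
  "Cconst m p = 1 / (SUP X\<in>region p. ratioC m p X)"

definition flow_rhs :: "real \<Rightarrow> real \<Rightarrow> nat \<Rightarrow> (nat \<Rightarrow> real) \<Rightarrow> nat \<Rightarrow> real" where
  "flow_rhs m chi N X i =
     - (if i < N then (X (i+1) - X i) powr (-m) else 0)
     + (if 1 < i then (X i - X (i-1)) powr (-m) else 0)
     + 2 * chi * (\<Sum>j\<in>{1..N}-{i}. real_of_int (sgn (int j - int i)) * \<bar>X j - X i\<bar> powr (-m))"

definition is_solution ::
  "real \<Rightarrow> real \<Rightarrow> nat \<Rightarrow> real \<Rightarrow> (real \<Rightarrow> nat \<Rightarrow> real) \<Rightarrow> bool" where
  "is_solution m chi N T X \<longleftrightarrow>
     (\<forall>t\<in>{0..<T}. X t \<in> region N) \<and>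
     (\<forall>i\<in>{1..N}. continuous_on {0..<T} (\<lambda>t. X t i)) \<and>
     (\<forall>i\<in>{1..N}. \<forall>t\<in>{0<..<T}.
        ((\<lambda>s. X s i) has_real_derivative flow_rhs m chi N (X t) i) (at t))"

definition weak_blowup :: "nat \<Rightarrow> real \<Rightarrow> (real \<Rightarrow> nat \<Rightarrow> real) \<Rightarrow> nat \<Rightarrow> nat \<Rightarrow> bool" where
  "weak_blowup N T X l r \<longleftrightarrow> 1 \<le> l \<and> l \<le> r \<and> r \<le> N \<and>
     (\<forall>i\<in>{l..<r}. Liminf (at_left T) (\<lambda>t. ereal (X t (i+1) - X t i)) = 0)"

definition weak_blowup_set :: "nat \<Rightarrow> real \<Rightarrow> (real \<Rightarrow> nat \<Rightarrow> real) \<Rightarrow> nat \<Rightarrow> nat \<Rightarrow> bool" where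
  "weak_blowup_set N T X l r \<longleftrightarrow> weak_blowup N T X l r \<and>
     (\<forall>l' r'. weak_blowup N T X l' r' \<and> {l..r} \<subseteq> {l'..r'} \<longrightarrow> {l'..r'} = {l..r})"

end

theory Submission
  imports Defs
begin

text \<open>Suppose a weak blow-up set \<open>[s+1, s+p]\<close> had \<open>2 \<le> p \<le> k\<close> indices. By maximality the two gaps
  adjacent to it stay bounded below near \<open>T\<close>, so its particles follow the gradient flow of their own
  energy \<open>\<Sum>\<^sub>i g\<^sub>i^(1-m) - \<chi> \<Sum>\<^sub>i\<^sub>\<noteq>\<^sub>j |x\<^sub>j - x\<^sub>i|^(1-m)\<close> (\<open>g\<^sub>i\<close> the gaps) up to a bounded external force,
  and this energy stays bounded up to \<open>T\<close>. Completing the cluster by \<open>k - p\<close> unit gaps gives a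
  competitor for \<open>C\<^sub>k\<close>, so the pair sum is at most \<open>1/C\<^sub>k\<close> times the gap sum plus \<open>k - p\<close>; as
  \<open>\<chi> < C\<^sub>k\<close>, the gap sum is bounded, hence every gap is bounded from below, contradicting the
  blow-up.\<close>

lemma succ_increasing_less:
  fixes y :: "nat \<Rightarrow> 'a::order"
  assumes "\<And>n. n \<in> {a..<b} \<Longrightarrow> y n < y (n+1)" "a \<le> i" "i < j" "j \<le> b"
  shows "y i < y j"
proof (rule lift_Suc_mono_less_ivl[where N="{a..<b}"])
qed (use assms in auto)

lemma succ_increasing_le:
  fixes y :: "nat \<Rightarrow> 'a::order"
  assumes "\<And>n. n \<in> {a..<b} \<Longrightarrow> y n < y (n+1)" "a \<le> i" "i \<le> j" "j \<le> b"
  shows "y i \<le> y j"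
  using succ_increasing_less[of a b y i j] assms by (cases "i = j") auto

lemma sgn_diff_eq_sgn_index_diff:
  fixes y :: "nat \<Rightarrow> real"
  assumes incr: "\<And>i. i \<in> {1..<p} \<Longrightarrow> y i < y (i+1)" and "i \<in> {1..p}" "j \<in> {1..p}"
  shows "sgn (y j - y i) = real_of_int (sgn (int j - int i))"
proof -
  have "y a < y b" if "a < b" "a \<in> {1..p}" "b \<in> {1..p}" for a b
    using that by (intro succ_increasing_less[of 1 p y, OF incr]) auto
  from this[of i j] this[of j i] assms(2,3) show ?thesis
    by (cases i j rule: linorder_cases) auto
qed

lemma sum_mult_succ_diff:
  fixes a v :: "nat \<Rightarrow> 'a::comm_ring"
  shows "(\<Sum>i=1..<p. a i * (v (i+1) - v i)) =
    (\<Sum>i=1..p. ((if 1 < i then a (i-1) else 0) - (if i < p then a i else 0)) * v i)"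
proof (induction p)
  case (Suc p)
  show ?case
  proof (cases "p = 0")
    case False
    have "(\<Sum>i=1..p. ((if 1 < i then a (i-1) else 0) - (if i < Suc p then a i else 0)) * v i)
        = (\<Sum>i=1..p. ((if 1 < i then a (i-1) else 0) - (if i < p then a i else 0)) * v i
                     - (if i = p then a p * v p else 0))"
      by (rule sum.cong) (auto simp: algebra_simps)
    also have "\<dots> = (\<Sum>i=1..<p. a i * (v (i+1) - v i)) - a p * v p"
      unfolding Suc.IH using False by (simp add: sum_subtractf)
    finally show ?thesis
      using False by (simp add: atLeastLessThanSuc algebra_simps)
  qed simp
qed simp

lemma sum_sum_antisym_mult_diff:
  fixes c :: "'b \<Rightarrow> 'b \<Rightarrow> 'a::comm_ring_1"
  assumes antisym: "\<And>i j. c j i = - c i j"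
  shows "(\<Sum>i\<in>A. \<Sum>j\<in>A. c i j * (v j - v i)) = - 2 * (\<Sum>i\<in>A. (\<Sum>j\<in>A. c i j) * v i)"
proof -
  have "(\<Sum>i\<in>A. \<Sum>j\<in>A. c i j * v j) = (\<Sum>j\<in>A. \<Sum>i\<in>A. c i j * v j)"
    by (rule sum.swap)
  also have "\<dots> = (\<Sum>j\<in>A. \<Sum>i\<in>A. - (c j i * v j))"
    by (intro sum.cong refl) (metis antisym mult_minus_left)
  also have "\<dots> = - (\<Sum>i\<in>A. \<Sum>j\<in>A. c i j * v i)"
    by (simp add: sum_negf)
  finally show ?thesis
    by (simp add: right_diff_distrib sum_subtractf sum_distrib_right)
qed

lemma has_real_derivative_abs_powr:
  fixes f :: "real \<Rightarrow> real"
  assumes f: "(f has_real_derivative D) (at x)" and nz: "f x \<noteq> 0"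
  shows "((\<lambda>y. \<bar>f y\<bar> powr a) has_real_derivative a * sgn (f x) * \<bar>f x\<bar> powr (a - 1) * D) (at x)"
proof -
  define \<sigma> where "\<sigma> = sgn (f x)"
  have lim: "(f \<longlongrightarrow> f x) (nhds x)"
    using DERIV_isCont[OF f] by (simp add: isCont_def tendsto_at_iff_tendsto_nhds)
  have "\<forall>\<^sub>F y in nhds x. f y \<noteq> 0 \<and> (0 < f y \<longleftrightarrow> 0 < f x)"
  proof (cases "0 < f x")
    case True
    show ?thesis using order_tendstoD(1)[OF lim True] by (rule eventually_mono) (use True in auto)
  next
    case False
    then have "f x < 0" using nz by simp
    show ?thesis using order_tendstoD(2)[OF lim \<open>f x < 0\<close>] by (rule eventually_mono) (use False in auto)
  qed
  then have "\<forall>\<^sub>F y in nhds x. \<bar>f y\<bar> powr a = (\<sigma> * f y) powr a"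
    by (rule eventually_mono) (use nz in \<open>auto simp: \<sigma>_def sgn_if\<close>)
  moreover have "\<sigma> * f x = \<bar>f x\<bar>" "\<sigma> * \<sigma> = 1" using nz by (auto simp: \<sigma>_def sgn_if)
  moreover have "((\<lambda>y. (\<sigma> * f y) powr a) has_real_derivative
      a * (\<sigma> * f x) powr (a - 1) * (\<sigma> * D)) (at x)"
    using DERIV_fun_powr[OF DERIV_cmult[OF f, of \<sigma>], of a] \<open>\<sigma> * f x = \<bar>f x\<bar>\<close> nz by simp
  ultimately show ?thesis
    unfolding \<sigma>_def[symmetric] by (subst DERIV_cong_ev[OF refl _ refl]) (auto simp: ac_simps)
qed

lemma powr_inverse_le_of_powr_le:
  fixes a y M :: real
  assumes "a < 0" "0 < y" "y powr a \<le> M"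
  shows "M powr (1 / a) \<le> y"
proof -
  have "M powr (1 / a) \<le> (y powr a) powr (1 / a)"
    using assms by (intro powr_mono2') (auto simp: divide_nonpos_neg)
  also have "\<dots> = y" using assms by (simp add: powr_powr)
  finally show ?thesis .
qed

lemma neg_mult_le_square_of_abs_diff_le:
  fixes g v c :: real
  assumes "\<bar>v - g\<bar> \<le> 2 * c"
  shows "- (g * v) \<le> c\<^sup>2"
proof -
  have "- (g * v) \<le> (v - g)\<^sup>2 / 4"
    using zero_le_power2[of "v + g"] by (simp add: power2_eq_square algebra_simps)
  also have "(v - g)\<^sup>2 \<le> (2 * c)\<^sup>2"
    using assms by (metis abs_ge_zero power2_abs power_mono)
  finally show ?thesis by (simp add: power_mult_distrib)
qed

lemma eventually_at_left_obtain_interval: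
  fixes T :: real
  assumes "0 < T" "eventually P (at_left T)"
  obtains t0 where "0 < t0" "t0 < T" "\<And>t. t \<in> {t0..<T} \<Longrightarrow> P t"
proof -
  have "eventually (\<lambda>t. 0 < t \<and> P t) (at_left T)"
    using assms(2) eventually_at_left_real[OF assms(1)] by eventually_elim auto
  then obtain b where "b < T" and b: "\<And>t. b < t \<Longrightarrow> t < T \<Longrightarrow> 0 < t \<and> P t"
    unfolding eventually_at_left_field by blast
  then show thesis using b[of "(b + T) / 2"] by (intro that[of "(b + T) / 2"]) auto
qed

lemma Liminf_ereal_pos_imp_eventually_ge:
  fixes f :: "'a \<Rightarrow> real"
  assumes "0 < Liminf F (\<lambda>x. ereal (f x))"
  shows "\<exists>z>0. eventually (\<lambda>x. z \<le> f x) F"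
proof -
  obtain z where z: "0 < ereal z" "ereal z < Liminf F (\<lambda>x. ereal (f x))"
    using ereal_dense2[OF assms] by blast
  from less_LiminfD[OF z(2)] have "eventually (\<lambda>x. z \<le> f x) F"
    by (rule eventually_mono) simp
  with z(1) show ?thesis by auto
qed

lemma region_strict_mono:
  assumes "Y \<in> region N" "1 \<le> a" "a < b" "b \<le> N"
  shows "Y a < Y b"
  by (rule succ_increasing_less[of 1 N Y a b, OF _ assms(2-4)]) (use assms(1) in \<open>auto simp: region_def\<close>)

lemma region_mono:
  assumes "Y \<in> region N" "1 \<le> a" "a \<le> b" "b \<le> N"
  shows "Y a \<le> Y b"
  by (rule succ_increasing_le[of 1 N Y a b, OF _ assms(2-4)]) (use assms(1) in \<open>auto simp: region_def\<close>)

text \<open>Energies of the configuration \<open>y\<close> on the indices \<open>1..p\<close>; the cluster \<open>[s+1, s+p]\<close> of a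
  configuration \<open>x\<close> is handled as \<open>\<lambda>i. x (i + s)\<close>.\<close>
definition gap_energy :: "real \<Rightarrow> nat \<Rightarrow> (nat \<Rightarrow> real) \<Rightarrow> real" where
  "gap_energy m p y = (\<Sum>i=1..<p. (y (i+1) - y i) powr (1 - m))"

definition pair_energy :: "real \<Rightarrow> nat \<Rightarrow> (nat \<Rightarrow> real) \<Rightarrow> real" where
  "pair_energy m p y = (\<Sum>i\<in>{1..p}. \<Sum>j\<in>{1..p}-{i}. \<bar>y j - y i\<bar> powr (1 - m))"

definition cluster_energy :: "real \<Rightarrow> real \<Rightarrow> nat \<Rightarrow> (nat \<Rightarrow> real) \<Rightarrow> real" where
  "cluster_energy m chi p y = gap_energy m p y - chi * pair_energy m p y"

lemma ratioC_eq_pair_energy_div_gap_energy: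
  "ratioC m p y = pair_energy m p y / gap_energy m p y"
  by (simp add: ratioC_def pair_energy_def gap_energy_def)

lemma has_real_derivative_gap_energy:
  assumes deriv: "\<And>i. i \<in> {1..p} \<Longrightarrow> ((\<lambda>\<tau>. y \<tau> i) has_real_derivative v i) (at t)"
    and incr: "\<And>i. i \<in> {1..<p} \<Longrightarrow> y t i < y t (i+1)"
  shows "((\<lambda>\<tau>. gap_energy m p (y \<tau>)) has_real_derivative
           (1 - m) * (\<Sum>i=1..<p. (y t (i+1) - y t i) powr (-m) * (v (i+1) - v i))) (at t)"
  unfolding gap_energy_def sum_distrib_left
proof (rule DERIV_sum)
  fix i assume i: "i \<in> {1..<p}"
  have "((\<lambda>\<tau>. y \<tau> (i+1) - y \<tau> i) has_real_derivative v (i+1) - v i) (at t)"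
    using i by (intro DERIV_diff deriv) auto
  from DERIV_fun_powr[OF this, of "1 - m"] incr[OF i]
  show "((\<lambda>\<tau>. (y \<tau> (i+1) - y \<tau> i) powr (1 - m)) has_real_derivative
      (1 - m) * ((y t (i+1) - y t i) powr (-m) * (v (i+1) - v i))) (at t)"
    by (simp add: mult.assoc)
qed

lemma has_real_derivative_pair_energy:
  assumes deriv: "\<And>i. i \<in> {1..p} \<Longrightarrow> ((\<lambda>\<tau>. y \<tau> i) has_real_derivative v i) (at t)"
    and incr: "\<And>i. i \<in> {1..<p} \<Longrightarrow> y t i < y t (i+1)"
  shows "((\<lambda>\<tau>. pair_energy m p (y \<tau>)) has_real_derivative
           (1 - m) * (\<Sum>i\<in>{1..p}. \<Sum>j\<in>{1..p}-{i}.
              real_of_int (sgn (int j - int i)) * \<bar>y t j - y t i\<bar> powr (-m) * (v j - v i))) (at t)"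
  unfolding pair_energy_def sum_distrib_left
proof (intro DERIV_sum)
  fix i j assume i: "i \<in> {1..p}" and j: "j \<in> {1..p}-{i}"
  have sgn: "sgn (y t j - y t i) = real_of_int (sgn (int j - int i))"
    using sgn_diff_eq_sgn_index_diff[of p "y t"] incr i j by auto
  then have "y t j - y t i \<noteq> 0" using j by (auto simp: sgn_if split: if_splits)
  moreover have "((\<lambda>\<tau>. y \<tau> j - y \<tau> i) has_real_derivative v j - v i) (at t)"
    using i j by (intro DERIV_diff deriv) auto
  ultimately have "((\<lambda>\<tau>. \<bar>y \<tau> j - y \<tau> i\<bar> powr (1 - m)) has_real_derivative (1 - m) *
      sgn (y t j - y t i) * \<bar>y t j - y t i\<bar> powr (1 - m - 1) * (v j - v i)) (at t)"
    by (rule has_real_derivative_abs_powr[rotated])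
  then show "((\<lambda>\<tau>. \<bar>y \<tau> j - y \<tau> i\<bar> powr (1 - m)) has_real_derivative (1 - m) *
      (real_of_int (sgn (int j - int i)) * \<bar>y t j - y t i\<bar> powr (-m) * (v j - v i))) (at t)"
    by (simp add: sgn mult.assoc)
qed

text \<open>That is, \<open>flow_rhs m chi p\<close> is \<open>-1/(m-1)\<close> times the gradient of \<open>cluster_energy m chi p\<close>:
  the system is the gradient flow of this energy.\<close>
lemma has_real_derivative_cluster_energy:
  assumes deriv: "\<And>i. i \<in> {1..p} \<Longrightarrow> ((\<lambda>\<tau>. y \<tau> i) has_real_derivative v i) (at t)"
    and incr: "\<And>i. i \<in> {1..<p} \<Longrightarrow> y t i < y t (i+1)"
  shows "((\<lambda>\<tau>. cluster_energy m chi p (y \<tau>)) has_real_derivative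
           (1 - m) * (\<Sum>i=1..p. flow_rhs m chi p (y t) i * v i)) (at t)"
proof -
  define a where "a i = (y t (i+1) - y t i) powr (-m)" for i
  define c where "c i j = real_of_int (sgn (int j - int i)) * \<bar>y t j - y t i\<bar> powr (-m)" for i j
  have c_antisym: "c j i = - c i j" for i j
    by (simp add: c_def abs_minus_commute sgn_if)
  have gap: "(\<Sum>i=1..<p. a i * (v (i+1) - v i)) =
      (\<Sum>i=1..p. ((if 1 < i then a (i-1) else 0) - (if i < p then a i else 0)) * v i)"
    by (rule sum_mult_succ_diff)
  have pair: "(\<Sum>i\<in>{1..p}. \<Sum>j\<in>{1..p}-{i}. c i j * (v j - v i)) =
      - 2 * (\<Sum>i=1..p. (\<Sum>j\<in>{1..p}-{i}. c i j) * v i)"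
    using sum_sum_antisym_mult_diff[where c=c and A="{1..p}" and v=v, OF c_antisym]
    by (simp add: sum_diff1 c_def)
  have flow: "flow_rhs m chi p (y t) i = (if 1 < i then a (i-1) else 0) - (if i < p then a i else 0)
      + 2 * chi * (\<Sum>j\<in>{1..p}-{i}. c i j)" for i
    by (simp add: flow_rhs_def a_def c_def)
  have "((\<lambda>\<tau>. cluster_energy m chi p (y \<tau>)) has_real_derivative
      (1 - m) * (\<Sum>i=1..<p. a i * (v (i+1) - v i))
      - chi * ((1 - m) * (\<Sum>i\<in>{1..p}. \<Sum>j\<in>{1..p}-{i}. c i j * (v j - v i)))) (at t)"
    unfolding cluster_energy_def a_def c_def
    by (intro DERIV_diff DERIV_cmult has_real_derivative_gap_energy has_real_derivative_pair_energy
        deriv incr)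
  also have "(1 - m) * (\<Sum>i=1..<p. a i * (v (i+1) - v i))
      - chi * ((1 - m) * (\<Sum>i\<in>{1..p}. \<Sum>j\<in>{1..p}-{i}. c i j * (v j - v i)))
      = (1 - m) * (\<Sum>i=1..p. flow_rhs m chi p (y t) i * v i)"
  proof -
    have "(\<Sum>i=1..p. flow_rhs m chi p (y t) i * v i) =
        (\<Sum>i=1..p. ((if 1 < i then a (i-1) else 0) - (if i < p then a i else 0)) * v i)
        + 2 * chi * (\<Sum>i=1..p. (\<Sum>j\<in>{1..p}-{i}. c i j) * v i)"
      unfolding flow distrib_right sum.distrib by (simp add: sum_distrib_left[symmetric] mult.assoc)
    then show ?thesis unfolding gap pair by (simp add: algebra_simps)
  qed
  finally show ?thesis .
qed

lemma pair_energy_le_square_gap_energy: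
  fixes m :: real
  assumes m: "1 \<le> m" and incr: "\<And>i. i \<in> {1..<k} \<Longrightarrow> y i < y (i+1)"
  shows "pair_energy m k y \<le> real k * real k * gap_energy m k y"
proof -
  have gap_nonneg: "0 \<le> gap_energy m k y" by (simp add: gap_energy_def sum_nonneg)
  have term_le: "\<bar>y j - y i\<bar> powr (1 - m) \<le> gap_energy m k y" if "i \<in> {1..k}" "j \<in> {1..k}-{i}" for i j
  proof -
    define a where "a = min i j"
    have a: "a \<in> {1..<k}" using that by (auto simp: a_def min_def)
    have "y a < y (a+1)" using a by (rule incr)
    moreover have "y (a+1) \<le> y (max i j)"
      by (rule succ_increasing_le[of 1 k y, OF incr]) (use a that in \<open>auto simp: a_def\<close>)
    ultimately have "\<bar>y j - y i\<bar> powr (1 - m) \<le> (y (a+1) - y a) powr (1 - m)"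
      using m by (intro powr_mono2') (auto simp: a_def min_def max_def split: if_splits)
    also have "\<dots> \<le> gap_energy m k y"
      unfolding gap_energy_def using that by (intro member_le_sum) (auto simp: a_def)
    finally show ?thesis .
  qed
  have "pair_energy m k y \<le> (\<Sum>i\<in>{1..k}. \<Sum>j\<in>{1..k}-{i}. gap_energy m k y)"
    unfolding pair_energy_def by (intro sum_mono term_le)
  also have "\<dots> \<le> (\<Sum>i\<in>{1..k}. \<Sum>j\<in>{1..k}. gap_energy m k y)"
    using gap_nonneg by (intro sum_mono sum_mono2) auto
  finally show ?thesis by simp
qed

lemma bdd_above_ratioC:
  fixes m :: real
  assumes "1 \<le> m"
  shows "bdd_above (ratioC m k ` region k)"
proof (rule bdd_aboveI2)
  fix Y assume "Y \<in> region k"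
  then have "pair_energy m k Y \<le> real k * real k * gap_energy m k Y"
    using assms by (intro pair_energy_le_square_gap_energy) (auto simp: region_def)
  moreover have "0 \<le> gap_energy m k Y" by (simp add: gap_energy_def sum_nonneg)
  ultimately show "ratioC m k Y \<le> real k * real k"
    unfolding ratioC_eq_pair_energy_div_gap_energy
    by (cases "gap_energy m k Y = 0") (auto simp: divide_le_eq)
qed

lemma less_Cconst_obtains_ratioC_bound:
  fixes m chi :: real
  assumes m: "1 \<le> m" and chi: "0 < chi" "chi < Cconst m k"
  obtains R where "\<And>Y. Y \<in> region k \<Longrightarrow> ratioC m k Y \<le> R" "chi * R < 1"
proof
  define R where "R = (SUP Y\<in>region k. ratioC m k Y)"
  show "ratioC m k Y \<le> R" if "Y \<in> region k" for Y
    unfolding R_def using that bdd_above_ratioC[OF m] by (rule cSUP_upper)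
  have "chi < 1 / R" using chi(2) by (simp add: Cconst_def R_def)
  moreover from this chi(1) have "0 < R" by (smt (verit) zero_less_divide_1_iff)
  ultimately show "chi * R < 1" by (simp add: field_simps)
qed

lemma gap_energy_pos:
  assumes p: "2 \<le> p" and incr: "\<And>i. i \<in> {1..<p} \<Longrightarrow> y i < y (i+1)"
  shows "0 < gap_energy m p y"
proof -
  have "0 < (y (i+1) - y i) powr (1 - m)" if "i \<in> {1..<p}" for i
    using incr[OF that] by simp
  then show ?thesis unfolding gap_energy_def using p by (intro sum_pos) auto
qed

text \<open>Centering an increasing configuration puts it into \<open>region k\<close> without changing its energies.\<close>
lemma pair_energy_le_of_ratioC_bound:
  fixes m R :: real and y :: "nat \<Rightarrow> real"
  assumes k: "2 \<le> k" and incr: "\<And>i. i \<in> {1..<k} \<Longrightarrow> y i < y (i+1)"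
    and R: "\<And>Y. Y \<in> region k \<Longrightarrow> ratioC m k Y \<le> R"
  shows "pair_energy m k y \<le> R * gap_energy m k y"
proof -
  define Y where "Y j = y j - (\<Sum>i=1..k. y i) / real k" for j
  have Y_diff: "Y j - Y i = y j - y i" for i j by (simp add: Y_def)
  have "Y \<in> region k"
  proof -
    have "Y i < Y (i+1)" if "i \<in> {1..<k}" for i
      using incr[OF that] Y_diff[of "i+1" i] by simp
    moreover have "(\<Sum>i=1..k. Y i) = 0"
      using k by (simp add: Y_def sum_subtractf)
    ultimately show ?thesis unfolding region_def by blast
  qed
  moreover have "ratioC m k Y = pair_energy m k y / gap_energy m k y"
    unfolding ratioC_eq_pair_energy_div_gap_energy pair_energy_def gap_energy_def Y_diff ..
  ultimately have "pair_energy m k y / gap_energy m k y \<le> R" using R by metis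
  moreover have "0 < gap_energy m k y" using k incr by (rule gap_energy_pos)
  ultimately show ?thesis by (simp add: divide_le_eq)
qed

text \<open>A cluster of \<open>p \<le> k\<close> particles, completed by \<open>k - p\<close> further particles at unit spacing,
  is a competitor in the definition of \<open>C\<^sub>k\<close>.\<close>
lemma pair_energy_le_ratio_bound:
  fixes m R :: real and y :: "nat \<Rightarrow> real"
  assumes p: "2 \<le> p" "p \<le> k" and incr: "\<And>i. i \<in> {1..<p} \<Longrightarrow> y i < y (i+1)"
    and R: "\<And>Y. Y \<in> region k \<Longrightarrow> ratioC m k Y \<le> R"
  shows "pair_energy m p y \<le> R * (gap_energy m p y + real (k - p))"
proof -
  define z where "z j = (if j \<le> p then y j else y p + real (j - p))" for j
  have z_incr: "z i < z (i+1)" if "i \<in> {1..<k}" for i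
    using incr[of i] that by (cases "i < p") (auto simp: z_def of_nat_diff)
  have "gap_energy m k z = (\<Sum>i=1..<p. (z (i+1) - z i) powr (1 - m))
      + (\<Sum>i=p..<k. (z (i+1) - z i) powr (1 - m))"
    unfolding gap_energy_def using p by (intro sum.atLeastLessThan_concat[symmetric]) auto
  also have "(\<Sum>i=1..<p. (z (i+1) - z i) powr (1 - m)) = gap_energy m p y"
    unfolding gap_energy_def by (intro sum.cong refl) (simp add: z_def)
  also have "(\<Sum>i=p..<k. (z (i+1) - z i) powr (1 - m)) = (\<Sum>i=p..<k. 1)"
    by (intro sum.cong refl) (auto simp: z_def of_nat_diff)
  finally have gap: "gap_energy m k z = gap_energy m p y + real (k - p)" by simp
  have "pair_energy m p y = (\<Sum>i\<in>{1..p}. \<Sum>j\<in>{1..p}-{i}. \<bar>z j - z i\<bar> powr (1 - m))"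
    unfolding pair_energy_def by (intro sum.cong refl) (auto simp: z_def)
  also have "\<dots> \<le> (\<Sum>i\<in>{1..p}. \<Sum>j\<in>{1..k}-{i}. \<bar>z j - z i\<bar> powr (1 - m))"
    using p by (intro sum_mono sum_mono2) auto
  also have "\<dots> \<le> pair_energy m k z"
    unfolding pair_energy_def using p by (intro sum_mono2 sum_nonneg) auto
  also have "\<dots> \<le> R * gap_energy m k z"
    using p z_incr R by (intro pair_energy_le_of_ratioC_bound) auto
  finally show ?thesis using gap by simp
qed

definition cluster_separated :: "nat \<Rightarrow> nat \<Rightarrow> nat \<Rightarrow> real \<Rightarrow> (nat \<Rightarrow> real) \<Rightarrow> bool" where
  "cluster_separated N s p d x \<longleftrightarrow>
     (0 < s \<longrightarrow> d \<le> x (s+1) - x s) \<and> (s + p < N \<longrightarrow> d \<le> x (s+p+1) - x (s+p))"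

lemma cluster_separated_dist_outside:
  assumes x: "x \<in> region N" and sp: "s + p \<le> N" and sep: "cluster_separated N s p d x"
    and i: "i \<in> {1..p}" and j: "j \<in> {1..N} - {s+1..s+p}"
  shows "d \<le> \<bar>x j - x (i+s)\<bar>"
proof (cases "j \<le> s")
  case True
  then have "x j \<le> x s" "x (s+1) \<le> x (i+s)" "0 < s"
    using region_mono[OF x] i j sp by auto
  then show ?thesis using sep by (auto simp: cluster_separated_def abs_if)
next
  case False
  then have "x (s+p+1) \<le> x j" "x (i+s) \<le> x (s+p)" "s + p < N"
    using region_mono[OF x] i j sp by auto
  then show ?thesis using sep by (auto simp: cluster_separated_def abs_if)
qed

lemma flow_rhs_cluster_diff:
  fixes m chi :: real
  assumes sp: "s + p \<le> N" and i: "i \<in> {1..p}"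
  shows "flow_rhs m chi N x (i+s) - flow_rhs m chi p (\<lambda>j. x (j+s)) i
       = (if i = 1 \<and> 0 < s then (x (s+1) - x s) powr (-m) else 0)
         - (if i = p \<and> s + p < N then (x (s+p+1) - x (s+p)) powr (-m) else 0)
         + 2 * chi * (\<Sum>j\<in>{1..N}-{s+1..s+p}.
              real_of_int (sgn (int j - int (i+s))) * \<bar>x j - x (i+s)\<bar> powr (-m))"
proof -
  define I where "I = i + s"
  define F where "F j = real_of_int (sgn (int j - int I)) * \<bar>x j - x I\<bar> powr (-m)" for j
  define C where "C = {s+1..s+p}"
  have inside: "(\<Sum>j\<in>{1..p}-{i}. real_of_int (sgn (int j - int i)) * \<bar>x (j+s) - x (i+s)\<bar> powr (-m))
      = (\<Sum>j\<in>C-{I}. F j)"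
    by (rule sum.reindex_bij_witness[of _ "\<lambda>j. j - s" "\<lambda>j. j + s"]) (auto simp: C_def I_def F_def)
  have split: "(\<Sum>j\<in>{1..N}-{I}. F j) = (\<Sum>j\<in>C-{I}. F j) + (\<Sum>j\<in>{1..N}-C. F j)"
  proof -
    have "{1..N}-{I} = (C-{I}) \<union> ({1..N}-C)" "C \<subseteq> {1..N}" using sp i by (auto simp: C_def I_def)
    then show ?thesis by (simp add: sum.union_disjoint C_def Diff_Int_distrib2)
  qed
  have right: "(if I < N then (x (I+1) - x I) powr (-m) else 0)
      - (if i < p then (x (i+1+s) - x (i+s)) powr (-m) else 0)
      = (if i = p \<and> s + p < N then (x (s+p+1) - x (s+p)) powr (-m) else 0)"
    using i sp by (auto simp: I_def add.commute)
  have left: "(if 1 < I then (x I - x (I-1)) powr (-m) else 0)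
      - (if 1 < i then (x (i+s) - x (i-1+s)) powr (-m) else 0)
      = (if i = 1 \<and> 0 < s then (x (s+1) - x s) powr (-m) else 0)"
    using i by (auto simp: I_def add.commute)
  have "flow_rhs m chi N x I = - (if I < N then (x (I+1) - x I) powr (-m) else 0)
      + (if 1 < I then (x I - x (I-1)) powr (-m) else 0) + 2 * chi * (\<Sum>j\<in>{1..N}-{I}. F j)"
    unfolding flow_rhs_def F_def by (rule refl)
  moreover have "flow_rhs m chi p (\<lambda>j. x (j+s)) i = - (if i < p then (x (i+1+s) - x (i+s)) powr (-m) else 0)
      + (if 1 < i then (x (i+s) - x (i-1+s)) powr (-m) else 0)
      + 2 * chi * (\<Sum>j\<in>{1..p}-{i}. real_of_int (sgn (int j - int i)) * \<bar>x (j+s) - x (i+s)\<bar> powr (-m))"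
    unfolding flow_rhs_def by (rule refl)
  ultimately show ?thesis
    unfolding I_def[symmetric] inside[folded I_def] split right[symmetric] left[symmetric]
    by (simp add: F_def C_def algebra_simps)
qed

lemma flow_rhs_cluster_approx:
  fixes m chi d :: real
  assumes x: "x \<in> region N" and sp: "s + p \<le> N" and i: "i \<in> {1..p}"
    and sep: "cluster_separated N s p d x" and d: "0 < d" and chi: "0 \<le> chi" and m: "0 \<le> m"
  shows "\<bar>flow_rhs m chi N x (i+s) - flow_rhs m chi p (\<lambda>j. x (j+s)) i\<bar>
           \<le> 2 * ((1 + chi * real N) * d powr (-m))"
proof -
  define C where "C = {1..N}-{s+1..s+p}"
  define F where "F j = real_of_int (sgn (int j - int (i+s))) * \<bar>x j - x (i+s)\<bar> powr (-m)" for j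
  have gap_le: "g powr (-m) \<le> d powr (-m)" if "d \<le> g" for g
    using that d m by (intro powr_mono2') auto
  have left: "\<bar>if i = 1 \<and> 0 < s then (x (s+1) - x s) powr (-m) else 0\<bar> \<le> d powr (-m)"
    and right: "\<bar>if i = p \<and> s + p < N then (x (s+p+1) - x (s+p)) powr (-m) else 0\<bar> \<le> d powr (-m)"
    using sep gap_le d by (auto simp: cluster_separated_def)
  have "\<bar>F j\<bar> \<le> d powr (-m)" if "j \<in> C" for j
    using gap_le[OF cluster_separated_dist_outside[OF x sp sep i, of j]] that
    by (auto simp: F_def C_def abs_mult sgn_if)
  then have "\<bar>\<Sum>j\<in>C. F j\<bar> \<le> real (card C) * d powr (-m)"
    using sum_abs[of F C] sum_bounded_above[of C "\<lambda>j. \<bar>F j\<bar>"] by (meson order_trans)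
  also have "\<dots> \<le> real N * d powr (-m)"
    using card_mono[of "{1..N}" C] by (intro mult_right_mono) (auto simp: C_def)
  finally have "\<bar>2 * chi * (\<Sum>j\<in>C. F j)\<bar> \<le> 2 * chi * (real N * d powr (-m))"
    using chi by (simp add: abs_mult mult_left_mono)
  then show ?thesis
    using left right unfolding flow_rhs_cluster_diff[OF sp i] F_def[symmetric] C_def[symmetric] abs_le_iff
    by (simp add: algebra_simps)
qed

lemma is_solution_has_real_derivative_cluster_energy:
  assumes sol: "is_solution m chi N T X" and sp: "s + p \<le> N" and t: "t \<in> {0<..<T}"
  shows "((\<lambda>\<tau>. cluster_energy m chi p (\<lambda>i. X \<tau> (i+s))) has_real_derivative
           (1 - m) * (\<Sum>i=1..p. flow_rhs m chi p (\<lambda>i. X t (i+s)) i * flow_rhs m chi N (X t) (i+s))) (at t)"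
proof (rule has_real_derivative_cluster_energy)
  show "((\<lambda>\<tau>. X \<tau> (i+s)) has_real_derivative flow_rhs m chi N (X t) (i+s)) (at t)" if "i \<in> {1..p}" for i
    using sol t that sp unfolding is_solution_def by auto
  have "X t \<in> region N" using sol t unfolding is_solution_def by auto
  then show "X t (i+s) < X t (i+1+s)" if "i \<in> {1..<p}" for i
    using that sp by (intro region_strict_mono) auto
qed

lemma is_solution_cluster_energy_le:
  fixes m chi d t0 t :: real
  assumes sol: "is_solution m chi N T X" and sp: "s + p \<le> N"
    and t: "0 < t0" "t0 \<le> t" "t < T"
    and sep: "\<And>\<tau>. \<tau> \<in> {t0..<T} \<Longrightarrow> cluster_separated N s p d (X \<tau>)"
    and d: "0 < d" and chi: "0 \<le> chi" and m: "1 \<le> m"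
  shows "cluster_energy m chi p (\<lambda>i. X t (i+s)) \<le> cluster_energy m chi p (\<lambda>i. X t0 (i+s))
           + (m - 1) * real p * ((1 + chi * real N) * d powr (-m))\<^sup>2 * (t - t0)"
proof -
  define E where "E \<tau> = cluster_energy m chi p (\<lambda>i. X \<tau> (i+s))" for \<tau>
  define K where "K = (m - 1) * real p * ((1 + chi * real N) * d powr (-m))\<^sup>2"
  have "E t - K * t \<le> E t0 - K * t0"
  proof (rule DERIV_nonpos_imp_nonincreasing[OF t(2)])
    fix \<tau> assume \<tau>: "t0 \<le> \<tau>" "\<tau> \<le> t"
    then have \<tau>T: "\<tau> \<in> {0<..<T}" and x: "X \<tau> \<in> region N"
      using t sol unfolding is_solution_def by auto
    define g where "g i = flow_rhs m chi p (\<lambda>i. X \<tau> (i+s)) i" for i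
    define v where "v i = flow_rhs m chi N (X \<tau>) (i+s)" for i
    text \<open>The cluster moves along its own gradient flow up to the force of the separated rest,
      so the energy can only grow through that force.\<close>
    have "- (g i * v i) \<le> ((1 + chi * real N) * d powr (-m))\<^sup>2" if i: "i \<in> {1..p}" for i
      using flow_rhs_cluster_approx[OF x sp i sep[of \<tau>] d chi, of m] \<tau> t m
      unfolding g_def v_def by (intro neg_mult_le_square_of_abs_diff_le) auto
    then have "- (\<Sum>i=1..p. g i * v i) \<le> real p * ((1 + chi * real N) * d powr (-m))\<^sup>2"
      using sum_mono[of "{1..p}" "\<lambda>i. - (g i * v i)" "\<lambda>_. ((1 + chi * real N) * d powr (-m))\<^sup>2"]
      by (simp add: sum_negf)
    then have "(m - 1) * - (\<Sum>i=1..p. g i * v i) \<le> K"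
      using m unfolding K_def mult.assoc by (intro mult_left_mono) auto
    then have "(1 - m) * (\<Sum>i=1..p. g i * v i) \<le> K" by (simp add: algebra_simps)
    then show "\<exists>y. ((\<lambda>\<tau>. E \<tau> - K * \<tau>) has_real_derivative y) (at \<tau>) \<and> y \<le> 0"
      using is_solution_has_real_derivative_cluster_energy[OF sol sp \<tau>T]
      by (intro exI conjI) (auto simp: E_def g_def v_def intro!: derivative_eq_intros)
  qed
  then show ?thesis by (simp add: E_def K_def algebra_simps)
qed

lemma is_solution_eventually_gap_pos:
  assumes sol: "is_solution m chi N T X" and T: "0 < T" and i: "i \<in> {1..<N}"
  shows "eventually (\<lambda>t. 0 < X t (i+1) - X t i) (at_left T)"
  using eventually_at_left_real[OF T]
proof (rule eventually_mono)
  fix t assume "t \<in> {0<..<T}"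
  then have "X t \<in> region N" using sol by (auto simp: is_solution_def)
  then show "0 < X t (i+1) - X t i" using i by (simp add: region_def)
qed

lemma weak_blowup_set_neighbour_Liminf_pos:
  assumes sol: "is_solution m chi N T X" and T: "0 < T" and wb: "weak_blowup_set N T X l r"
    and i: "i \<in> {1..<N}" "i + 1 = l \<or> i = r"
  shows "0 < Liminf (at_left T) (\<lambda>t. ereal (X t (i+1) - X t i))"
proof -
  have "0 \<le> Liminf (at_left T) (\<lambda>t. ereal (X t (i+1) - X t i))"
    using is_solution_eventually_gap_pos[OF sol T i(1)] by (intro Liminf_bounded) (auto elim: eventually_mono)
  moreover have "Liminf (at_left T) (\<lambda>t. ereal (X t (i+1) - X t i)) \<noteq> 0"
  proof
    assume lim: "Liminf (at_left T) (\<lambda>t. ereal (X t (i+1) - X t i)) = 0"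
    have wb_lr: "1 \<le> l" "l \<le> r" "r \<le> N"
      and lim_lr: "\<And>j. j \<in> {l..<r} \<Longrightarrow> Liminf (at_left T) (\<lambda>t. ereal (X t (j+1) - X t j)) = 0"
      using wb unfolding weak_blowup_set_def weak_blowup_def by auto
    have maximal: "\<And>l' r'. weak_blowup N T X l' r' \<Longrightarrow> {l..r} \<subseteq> {l'..r'} \<Longrightarrow> {l'..r'} = {l..r}"
      using wb unfolding weak_blowup_set_def by blast
    show False
    proof (cases "i + 1 = l")
      case True
      have "Liminf (at_left T) (\<lambda>t. ereal (X t (j+1) - X t j)) = 0" if "j \<in> {i..<r}" for j
        using that lim lim_lr[of j] True by (cases "j = i") auto
      then have "weak_blowup N T X i r" using wb_lr i True by (auto simp: weak_blowup_def)
      then have "{i..r} = {l..r}" using True by (intro maximal) auto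
      moreover have "i \<in> {i..r}" using True wb_lr by simp
      ultimately show False using True by simp
    next
      case False
      then have "i = r" using i(2) by simp
      have "Liminf (at_left T) (\<lambda>t. ereal (X t (j+1) - X t j)) = 0" if "j \<in> {l..<r+1}" for j
        using that lim lim_lr[of j] \<open>i = r\<close> by (cases "j = r") auto
      then have "weak_blowup N T X l (r+1)" using wb_lr i \<open>i = r\<close> by (auto simp: weak_blowup_def)
      then have "{l..r+1} = {l..r}" by (intro maximal) auto
      moreover have "r + 1 \<in> {l..r+1}" using wb_lr by simp
      ultimately show False by simp
    qed
  qed
  ultimately show ?thesis by simp
qed

lemma weak_blowup_set_cluster_separated:
  assumes sol: "is_solution m chi N T X" and T: "0 < T" and wb: "weak_blowup_set N T X (s+1) (s+p)"
  shows "\<exists>d>0. eventually (\<lambda>t. cluster_separated N s p d (X t)) (at_left T)"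
proof -
  have sp: "s + p \<le> N" using wb by (simp add: weak_blowup_set_def weak_blowup_def)
  have neighbour: "\<exists>z>0. eventually (\<lambda>t. P \<longrightarrow> z \<le> X t (i+1) - X t i) (at_left T)"
    if "P \<Longrightarrow> i \<in> {1..<N} \<and> (i + 1 = s + 1 \<or> i = s + p)" for P i
  proof (cases P)
    case True
    with that have "0 < Liminf (at_left T) (\<lambda>t. ereal (X t (i+1) - X t i))"
      by (intro weak_blowup_set_neighbour_Liminf_pos[OF sol T wb]) auto
    then show ?thesis using True by (auto dest!: Liminf_ereal_pos_imp_eventually_ge)
  qed (auto intro: exI[of _ 1])
  obtain dL where dL: "0 < dL" "eventually (\<lambda>t. 0 < s \<longrightarrow> dL \<le> X t (s+1) - X t s) (at_left T)"
    using neighbour[of "0 < s" s] sp wb by (auto simp: weak_blowup_set_def weak_blowup_def)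
  obtain dR where dR: "0 < dR" "eventually (\<lambda>t. s + p < N \<longrightarrow> dR \<le> X t (s+p+1) - X t (s+p)) (at_left T)"
    using neighbour[of "s + p < N" "s + p"] sp wb by (auto simp: weak_blowup_set_def weak_blowup_def)
  have "eventually (\<lambda>t. cluster_separated N s p (min dL dR) (X t)) (at_left T)"
    using dL(2) dR(2) by eventually_elim (auto simp: cluster_separated_def)
  then show ?thesis using dL(1) dR(1) by (intro exI[of _ "min dL dR"]) auto
qed

lemma is_solution_gap_energy_bounded:
  fixes m chi T d t0 :: real
  assumes sol: "is_solution m chi N T X" and m: "1 \<le> m" and chi: "0 < chi" "chi < Cconst m k"
    and p: "2 \<le> p" "p \<le> k" and sp: "s + p \<le> N" and t0: "0 < t0" and d: "0 < d"
    and sep: "\<And>\<tau>. \<tau> \<in> {t0..<T} \<Longrightarrow> cluster_separated N s p d (X \<tau>)"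
  shows "\<exists>M. \<forall>t\<in>{t0..<T}. gap_energy m p (\<lambda>i. X t (i+s)) \<le> M"
proof -
  obtain R where R: "\<And>Y. Y \<in> region k \<Longrightarrow> ratioC m k Y \<le> R" and chiR: "chi * R < 1"
    using less_Cconst_obtains_ratioC_bound[of m chi k] m chi by auto
  define y where "y t = (\<lambda>i. X t (i+s))" for t
  define B where "B = cluster_energy m chi p (y t0) + (m - 1) * real p * ((1 + chi * real N) * d powr (-m))\<^sup>2 * T"
  have "gap_energy m p (y t) \<le> (B + chi * R * real (k - p)) / (1 - chi * R)" if t: "t \<in> {t0..<T}" for t
  proof -
    have "X t \<in> region N" using t t0 sol unfolding is_solution_def by auto
    then have incr: "y t i < y t (i+1)" if "i \<in> {1..<p}" for i
      using that sp unfolding y_def by (intro region_strict_mono[of "X t" N]) auto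
    have "(m - 1) * real p * ((1 + chi * real N) * d powr (-m))\<^sup>2 * (t - t0)
        \<le> (m - 1) * real p * ((1 + chi * real N) * d powr (-m))\<^sup>2 * T"
      using m t t0 by (intro mult_left_mono) (simp_all add: zero_le_mult_iff)
    moreover have "cluster_energy m chi p (y t) \<le> cluster_energy m chi p (y t0)
        + (m - 1) * real p * ((1 + chi * real N) * d powr (-m))\<^sup>2 * (t - t0)"
      unfolding y_def using t chi m by (intro is_solution_cluster_energy_le[OF sol sp t0] sep d) auto
    moreover have "chi * pair_energy m p (y t) \<le> chi * (R * (gap_energy m p (y t) + real (k - p)))"
      using p incr R chi(1) by (intro mult_left_mono pair_energy_le_ratio_bound) auto
    ultimately have "(1 - chi * R) * gap_energy m p (y t) \<le> B + chi * R * real (k - p)"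
      unfolding B_def cluster_energy_def by (simp add: algebra_simps)
    then show ?thesis using chiR by (simp add: field_simps)
  qed
  then show ?thesis unfolding y_def by blast
qed

lemma is_solution_cluster_gap_bounded_below:
  fixes m chi T d :: real
  assumes sol: "is_solution m chi N T X" and m: "1 < m" and chi: "0 < chi" "chi < Cconst m k"
    and p: "2 \<le> p" "p \<le> k" and sp: "s + p \<le> N" and T: "0 < T" and d: "0 < d"
    and sep: "eventually (\<lambda>t. cluster_separated N s p d (X t)) (at_left T)"
  shows "\<exists>\<eta>>0. eventually (\<lambda>t. \<eta> \<le> X t (s+2) - X t (s+1)) (at_left T)"
proof -
  obtain t0 where t0: "0 < t0" "t0 < T"
    and sep0: "\<And>\<tau>. \<tau> \<in> {t0..<T} \<Longrightarrow> cluster_separated N s p d (X \<tau>)"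
    using eventually_at_left_obtain_interval[OF T sep] by blast
  obtain M where M: "\<And>t. t \<in> {t0..<T} \<Longrightarrow> gap_energy m p (\<lambda>i. X t (i+s)) \<le> M"
    using is_solution_gap_energy_bounded[OF sol _ chi p sp t0(1) d sep0] m by force
  have gap: "0 < X t (s+2) - X t (s+1) \<and> (X t (s+2) - X t (s+1)) powr (1 - m) \<le> M"
    if "t \<in> {t0..<T}" for t
  proof -
    have "X t \<in> region N" using that t0 sol unfolding is_solution_def by auto
    then have "0 < X t (s+2) - X t (s+1)" using sp p region_strict_mono[of "X t" N "s+1" "s+2"] by simp
    moreover have "(X t (s+2) - X t (s+1)) powr (1 - m) \<le> gap_energy m p (\<lambda>i. X t (i+s))"
      using member_le_sum[of 1 "{1..<p}" "\<lambda>i. (X t (i+1+s) - X t (i+s)) powr (1 - m)"] p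
      by (simp add: gap_energy_def add.commute numeral_2_eq_2)
    ultimately show ?thesis using M[OF that] by simp
  qed
  define \<eta> where "\<eta> = M powr (1 / (1 - m))"
  have "0 < (X t0 (s+2) - X t0 (s+1)) powr (1 - m)" "(X t0 (s+2) - X t0 (s+1)) powr (1 - m) \<le> M"
    using gap[of t0] t0 by auto
  then have "0 < M" by linarith
  then have "0 < \<eta>" by (simp add: \<eta>_def)
  moreover have "\<eta> \<le> X t (s+2) - X t (s+1)" if "t \<in> {t0..<T}" for t
    unfolding \<eta>_def using m gap[OF that] by (intro powr_inverse_le_of_powr_le) auto
  then have "eventually (\<lambda>t. \<eta> \<le> X t (s+2) - X t (s+1)) (at_left T)"
    unfolding eventually_at_left_field using t0 by (intro exI[of _ t0]) auto
  ultimately show ?thesis by blast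
qed

theorem proposition5p3:
  fixes m chi T :: real and N k l r :: nat and X :: "real \<Rightarrow> nat \<Rightarrow> real"
  assumes "m > 1" and "N \<ge> 2" and "chi > 0" and "k \<ge> 2" and "chi < Cconst m k"
    and "T > 0"
    and "is_solution m chi N T X"
    and "weak_blowup_set N T X l r"
    and "card {l..r} \<ge> 2"
  shows "card {l..r} \<ge> k + 1"
proof (rule ccontr)
  assume "\<not> card {l..r} \<ge> k + 1"
  define s p where "s = l - 1" and "p = r + 1 - l"
  have wb: "weak_blowup N T X l r" using assms(8) by (simp add: weak_blowup_set_def)
  then have lr: "l = s + 1" "r = s + p" and sp: "s + p \<le> N" and p: "2 \<le> p" "p \<le> k"
    using assms(9) \<open>\<not> card {l..r} \<ge> k + 1\<close> by (auto simp: weak_blowup_def s_def p_def)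
  obtain d where "0 < d" and "eventually (\<lambda>t. cluster_separated N s p d (X t)) (at_left T)"
    using weak_blowup_set_cluster_separated[OF assms(7,6)] assms(8) lr by blast
  then obtain \<eta> where "0 < \<eta>" and "eventually (\<lambda>t. \<eta> \<le> X t (s+2) - X t (s+1)) (at_left T)"
    using is_solution_cluster_gap_bounded_below[OF assms(7,1,3,5) p sp assms(6)] by blast
  then have "ereal \<eta> \<le> Liminf (at_left T) (\<lambda>t. ereal (X t (l+1) - X t l))"
    unfolding lr by (intro Liminf_bounded) (auto elim: eventually_mono simp: add.commute)
  moreover have "Liminf (at_left T) (\<lambda>t. ereal (X t (l+1) - X t l)) = 0"
    using wb p lr by (auto simp: weak_blowup_def)
  ultimately show False using \<open>0 < \<eta>\<close> by simp
qed

end
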